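(* Let $k\ge 1$ and let $n\ge k-1$ be integers. Then the total number of standard Young tableaux of skew shape $\lambda/(k-1)$, summed over all partitions $\lambda$ of $n$ having at most three parts (and containing the one-row partition $(k-1)$), filled with the numbers $1,2,\ldots,n-k+1$, equals \[\sum_{i} r_{k,i}\, M_{i+n-k+1},\] where $M_m$ denotes the $m$th Motzkin number and the integers $r_{k,i}$ are defined by \[\sum_{k=1}^\infty r_k(x)y^k=\sum_{k=1}^\infty\sum_{i=0}^{k-1} r_{k,i}x^iy^k=\frac{y}{(1-y)\big(1+(1-x)y+y^2\big)}.\]
   Context: A partition $\lambda=(\lambda_1,\ldots,\lambda_l)$ of $n$ is a weakly decreasing sequence of positive integers summing to $n$; its parts are the $\lambda_i$. For partitions $\mu\subset\lambda$ (i.e. $\mu_i\le\lambda_i$ for all $i$), a standard Young tableau of skew shape $\lambda/\mu$ is a filling of the boxes of the Young diagram of $\lambda$ not in the Young diagram of $\mu$ with the numbers $1,2,\ldots,|\lambda|-|\mu|$, each used once, so that entries increase from left to right along rows and from top to bottom down columns. The Motzkin numbers are $M_m=\sum_{j=0}^{\lfloor m/2\rfloor}\frac{m!}{j!(j+1)!(m-2j)!}$, with generating function $\sum_{m\ge0}M_mx^m=\frac{1-x-\sqrt{1-2x-3x^2}}{2x^2}$. *)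

theory Defs
  imports Complex_Main "HOL-Computational_Algebra.Formal_Power_Series"
begin

definition is_partition :: "nat list \<Rightarrow> bool" where
  "is_partition lam \<longleftrightarrow> sorted_wrt (\<ge>) lam \<and> (\<forall>p \<in> set lam. 0 < p)"

definition partitions_at_most3 :: "nat \<Rightarrow> nat list set" where
  "partitions_at_most3 n = {lam. is_partition lam \<and> sum_list lam = n \<and> length lam \<le> 3}"

definition part_contains :: "nat list \<Rightarrow> nat list \<Rightarrow> bool" where
  "part_contains mu lam \<longleftrightarrow> length mu \<le> length lam \<and> (\<forall>i < length mu. mu ! i \<le> lam ! i)"

definition part :: "nat list \<Rightarrow> nat \<Rightarrow> nat" where
  "part lam i = (if i < length lam then lam ! i else 0)"

definition skew_boxes :: "nat list \<Rightarrow> nat list \<Rightarrow> (nat \<times> nat) set" where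
  "skew_boxes lam mu = {(i, j). i < length lam \<and> part mu i \<le> j \<and> j < part lam i}"

text \<open>Standard Young tableaux of skew shape lam/mu: bijective fillings of the boxes
  with 1..|lam|-|mu|, strictly increasing along rows and down columns
  (the filling is taken to be 0 outside the boxes, to make it unique).\<close>
definition skew_SYT :: "nat list \<Rightarrow> nat list \<Rightarrow> ((nat \<times> nat) \<Rightarrow> nat) set" where
  "skew_SYT lam mu = {T.
      bij_betw T (skew_boxes lam mu) {1..card (skew_boxes lam mu)} \<and>
      (\<forall>b. b \<notin> skew_boxes lam mu \<longrightarrow> T b = 0) \<and>
      (\<forall>i j j'. (i, j) \<in> skew_boxes lam mu \<and> (i, j') \<in> skew_boxes lam mu \<and> j < j'
               \<longrightarrow> T (i, j) < T (i, j')) \<and>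
      (\<forall>i i' j. (i, j) \<in> skew_boxes lam mu \<and> (i', j) \<in> skew_boxes lam mu \<and> i < i'
               \<longrightarrow> T (i, j) < T (i', j))}"

definition motzkin :: "nat \<Rightarrow> nat" where
  "motzkin m = (\<Sum>j = 0..m div 2. fact m div (fact j * fact (j + 1) * fact (m - 2 * j)))"

text \<open>The bivariate generating function y / ((1-y)(1+(1-x)y+y^2)) as a power series
  in y whose coefficients are power series in x.\<close>
definition r_gf :: "real fps fps" where
  "r_gf = fps_X * inverse ((1 - fps_X) * (1 + fps_const (1 - fps_X) * fps_X + fps_X ^ 2))"

definition r_coeff :: "nat \<Rightarrow> nat \<Rightarrow> real" where
  "r_coeff k i = fps_nth (fps_nth r_gf k) i"

end

theory Submission
  imports Defs "HOL-Computational_Algebra.Polynomial"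
begin

text \<open>
  Removing the cell that contains 1 shows that the tableaux to be counted are the walks of
  length N = n - k + 1 in Young's lattice of shapes with at most three rows, starting at the
  one-row shape (k - 1). Give each such shape its Schur polynomial in the specialisation
  e1 = e2 = x, e3 = 1 (an SL3-character, so full columns of height three may be removed). Pieri's
  rule, x times a Schur polynomial is the sum over all ways to add a box, then shows that the
  number of such walks from a shape \<lambda> is L(x^N s_\<lambda>) for every linear functional L with
  L(s_\<mu>) = 1 for all shapes \<mu>.
  The functional whose moments L(x^i) are the Motzkin numbers has this property: its orthogonal
  polynomials are the Chebyshev polynomials U_d((x - 1)/2), the complete homogeneous polynomial
  h_a is their partial sum up to degree a, hence L(h_a h_b) = min a b + 1 and, by Jacobi--Trudi,
  L(s_(a,b)) = L(h_a h_b - h_(a+1) h_(b-1)) = 1. Finally s_(k-1) = h_(k-1) = r_k(x), since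
  y / ((1 - y) (1 + (1 - x) y + y^2)) = y / (1 - x y + x y^2 - y^3).
\<close>

section \<open>Motzkin paths\<close>

fun motzkin_paths :: "nat \<Rightarrow> nat \<Rightarrow> int" where
  "motzkin_paths e 0 = (if e = 0 then 1 else 0)"
| "motzkin_paths e (Suc i) =
     (if 0 < e then motzkin_paths (e - 1) i else 0) + motzkin_paths e i + motzkin_paths (Suc e) i"

text \<open>Ballot numbers: the up/down paths of length e + 2k from height 0 to height e that stay
  nonnegative. The subtrahend is (e + 2k choose k - 1), written so that it vanishes for k = 0.\<close>
definition ballot :: "nat \<Rightarrow> nat \<Rightarrow> int" where
  "ballot k e = int (e + 2 * k choose k) - int (e + 2 * k choose (e + k + 1))"

lemma ballot_0_left [simp]: "ballot 0 e = 1"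
  by (simp add: ballot_def)

lemma ballot_Suc_Suc: "ballot (Suc k) (Suc e) = ballot (Suc k) e + ballot k (Suc (Suc e))"
  by (simp add: ballot_def algebra_simps)

lemma ballot_Suc_0: "ballot (Suc k) 0 = ballot k 1"
  by (simp add: ballot_def algebra_simps)

text \<open>Choose the e + 2k steps of the path that are not flat.\<close>
lemma motzkin_paths_eq_ballot_sum:
  assumes "i \<le> n"
  shows "motzkin_paths e i = (\<Sum>k\<le>n. int (i choose (e + 2 * k)) * ballot k e)"
  using assms
proof (induction i arbitrary: e n)
  case 0
  then show ?case by (simp add: binomial_eq_0 sum.atMost_shift)
next
  case (Suc i)
  then obtain n' where n: "n = Suc n'" "i \<le> n'" by (cases n) auto
  have IH: "motzkin_paths e' i = (\<Sum>k\<le>m. int (i choose (e' + 2 * k)) * ballot k e')" if "m \<in> {n', n}" for e' m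
    using Suc n that by auto
  show ?case
  proof (cases e)
    case 0
    have "(\<Sum>k\<le>n. int (Suc i choose (2 * k)) * ballot k 0)
        = 1 + (\<Sum>k\<le>n'. int (i choose Suc (2 * k)) * ballot k 1)
            + (\<Sum>k\<le>n'. int (i choose (2 * Suc k)) * ballot (Suc k) 0)"
      unfolding n sum.atMost_Suc_shift by (simp add: ballot_Suc_0 algebra_simps sum.distrib del: sum.atMost_Suc)
    also have "\<dots> = motzkin_paths 1 i + motzkin_paths 0 i"
      using IH[of n' 1] IH[of n 0] unfolding n sum.atMost_Suc_shift by (simp del: sum.atMost_Suc)
    finally show ?thesis using 0 by simp
  next
    case (Suc e')
    have "(\<Sum>k\<le>n. int (Suc i choose (e + 2 * k)) * ballot k e)
        = (\<Sum>k\<le>n. int (i choose (e' + 2 * k)) * ballot k e')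
            + (\<Sum>k\<le>n'. int (i choose (Suc (Suc e') + 2 * k)) * ballot k (Suc (Suc e')))
            + (\<Sum>k\<le>n. int (i choose (e + 2 * k)) * ballot k e)"
      unfolding Suc n sum.atMost_Suc_shift by (simp add: ballot_Suc_Suc algebra_simps sum.distrib del: sum.atMost_Suc)
    also have "\<dots> = motzkin_paths e' i + motzkin_paths (Suc e) i + motzkin_paths e i"
      using IH[of n' "Suc (Suc e')"] IH[of n e'] IH[of n e] Suc by simp
    finally show ?thesis using Suc by simp
  qed
qed

lemma Suc_times_ballot_0: "int (Suc k) * ballot k 0 = int (2 * k choose k)"
proof (cases k)
  case (Suc k')
  have two_k: "Suc (k + k') = 2 * k" using Suc by simp
  have "Suc k * (2 * k choose Suc k) = k * (2 * k choose k)"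
    using Suc_times_binomial_add[of "Suc k'" k'] unfolding two_k Suc[symmetric] .
  then have "int (Suc k) * int (2 * k choose Suc k) = int k * int (2 * k choose k)"
    by (metis of_nat_mult)
  then show ?thesis by (simp add: ballot_def algebra_simps)
qed (simp add: ballot_def)

lemma ballot_0_right: "ballot k 0 = int ((2 * k choose k) div Suc k)"
proof -
  have "0 \<le> int (Suc k) * ballot k 0"
    by (simp only: Suc_times_ballot_0 of_nat_0_le_iff)
  then have "ballot k 0 \<ge> 0"
    by (simp add: zero_le_mult_iff)
  then obtain c where c: "ballot k 0 = int c" by (metis nonneg_int_cases)
  then have "Suc k * c = (2 * k choose k)"
    using Suc_times_ballot_0[of k] by (metis of_nat_eq_iff of_nat_mult)
  then show ?thesis using c by (metis nonzero_mult_div_cancel_left old.nat.distinct(2))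
qed

lemma fact_div_motzkin_summand:
  assumes "2 * k \<le> i"
  shows "fact i div (fact k * fact (Suc k) * fact (i - 2 * k)) = (i choose (2 * k)) * ((2 * k choose k) div Suc k)"
proof -
  define c where "c = (2 * k choose k) div Suc k"
  have "Suc k * c = (2 * k choose k)"
    using Suc_times_ballot_0[of k] unfolding ballot_0_right c_def[symmetric]
    by (metis of_nat_eq_iff of_nat_mult)
  then have "(fact i :: nat) = fact k * fact k * (Suc k * c) * fact (i - 2 * k) * (i choose (2 * k))"
    using binomial_fact_lemma[OF assms] binomial_fact_lemma[of k "2 * k"] by (simp add: mult_2)
  also have "\<dots> = (fact k * fact (Suc k) * fact (i - 2 * k)) * ((i choose (2 * k)) * c)"
    by (simp add: algebra_simps)
  finally show ?thesis by (simp add: c_def del: fact_Suc)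
qed

lemma motzkin_paths_0: "motzkin_paths 0 i = int (motzkin i)"
proof -
  have "motzkin_paths 0 i = (\<Sum>k\<le>i. int (i choose (2 * k)) * ballot k 0)"
    using motzkin_paths_eq_ballot_sum[of i i 0] by simp
  also have "\<dots> = (\<Sum>k = 0..i div 2. int (i choose (2 * k)) * ballot k 0)"
    by (rule sum.mono_neutral_right) auto
  also have "\<dots> = int (motzkin i)"
    unfolding motzkin_def of_nat_sum
    by (intro sum.cong refl) (auto simp: ballot_0_right fact_div_motzkin_summand simp del: fact_Suc)
  finally show ?thesis .
qed

section \<open>The Motzkin functional and its orthogonal polynomials\<close>

definition motzkin_functional :: "nat \<Rightarrow> int poly \<Rightarrow> int" where
  "motzkin_functional e p = (\<Sum>i\<le>degree p. coeff p i * motzkin_paths e i)"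

lemma motzkin_functional_eq_sum:
  "degree p \<le> D \<Longrightarrow> motzkin_functional e p = (\<Sum>i\<le>D. coeff p i * motzkin_paths e i)"
  unfolding motzkin_functional_def by (rule sum.mono_neutral_left) (auto simp: coeff_eq_0)

lemma motzkin_functional_add: "motzkin_functional e (p + q) = motzkin_functional e p + motzkin_functional e q"
proof -
  define D where "D = max (degree p) (degree q)"
  have "degree (p + q) \<le> D" "degree p \<le> D" "degree q \<le> D"
    by (auto simp: D_def degree_add_le)
  then show ?thesis by (simp add: motzkin_functional_eq_sum sum.distrib algebra_simps)
qed

lemma motzkin_functional_minus: "motzkin_functional e (- p) = - motzkin_functional e p"
  by (simp add: motzkin_functional_def sum_negf)

lemma motzkin_functional_diff: "motzkin_functional e (p - q) = motzkin_functional e p - motzkin_functional e q"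
  using motzkin_functional_add[of e p "- q"] by (simp add: motzkin_functional_minus)

lemma motzkin_functional_0 [simp]: "motzkin_functional e 0 = 0"
  by (simp add: motzkin_functional_def)

lemma motzkin_functional_1: "motzkin_functional e 1 = (if e = 0 then 1 else 0)"
  by (simp add: motzkin_functional_def)

lemma motzkin_functional_sum: "motzkin_functional e (\<Sum>d\<in>A. f d) = (\<Sum>d\<in>A. motzkin_functional e (f d))"
  by (induction A rule: infinite_finite_induct) (auto simp: motzkin_functional_add)

lemma motzkin_functional_pCons_0:
  "motzkin_functional e (pCons 0 p) = (if 0 < e then motzkin_functional (e - 1) p else 0)
     + motzkin_functional e p + motzkin_functional (Suc e) p"
proof -
  have "motzkin_functional e (pCons 0 p) = (\<Sum>i\<le>Suc (degree p). coeff (pCons 0 p) i * motzkin_paths e i)"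
    by (rule motzkin_functional_eq_sum) (simp add: degree_pCons_le)
  also have "\<dots> = (\<Sum>i\<le>degree p. coeff p i * motzkin_paths e (Suc i))"
    by (simp add: sum.atMost_Suc_shift del: sum.atMost_Suc)
  also have "\<dots> = (\<Sum>i\<le>degree p. (if 0 < e then coeff p i * motzkin_paths (e - 1) i else 0)
      + coeff p i * motzkin_paths e i + coeff p i * motzkin_paths (Suc e) i)"
    by (intro sum.cong) (auto simp: algebra_simps)
  finally show ?thesis
    by (simp add: motzkin_functional_def sum.distrib)
qed

lemma motzkin_functional_x_minus_1_mult:
  "motzkin_functional e (([:0, 1:] - 1) * p)
     = (if 0 < e then motzkin_functional (e - 1) p else 0) + motzkin_functional (Suc e) p"
proof -
  have "([:0, 1:] - 1) * p = pCons 0 p - p" by (simp add: algebra_simps)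
  then show ?thesis by (simp add: motzkin_functional_diff motzkin_functional_pCons_0)
qed

text \<open>Chebyshev polynomials of the second kind evaluated at (x - 1) / 2.\<close>
fun motzkin_orth :: "nat \<Rightarrow> int poly" where
  "motzkin_orth 0 = 1"
| "motzkin_orth (Suc 0) = [:0, 1:] - 1"
| "motzkin_orth (Suc (Suc d)) = ([:0, 1:] - 1) * motzkin_orth (Suc d) - motzkin_orth d"

lemma motzkin_functional_orth: "motzkin_functional e (motzkin_orth d) = (if e = d then 1 else 0)"
proof (induction d arbitrary: e rule: motzkin_orth.induct)
  case 1
  then show ?case by (simp add: motzkin_functional_1)
next
  case 2
  then show ?case
    using motzkin_functional_x_minus_1_mult[of e 1] by (simp add: motzkin_functional_1)
next
  case (3 d)
  then show ?case
    by (auto simp: motzkin_functional_diff motzkin_functional_x_minus_1_mult)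
qed

lemma motzkin_functional_0_orth_mult:
  "motzkin_functional 0 (motzkin_orth d * p) = motzkin_functional d p"
proof (induction d arbitrary: p rule: motzkin_orth.induct)
  case 2
  then show ?case by (simp add: motzkin_functional_x_minus_1_mult)
next
  case (3 d)
  have "motzkin_orth (Suc (Suc d)) * p = motzkin_orth (Suc d) * (([:0, 1:] - 1) * p) - motzkin_orth d * p"
    by (simp add: algebra_simps)
  then show ?case
    using 3 by (simp add: motzkin_functional_diff motzkin_functional_x_minus_1_mult)
qed simp

lemma degree_motzkin_orth: "degree (motzkin_orth d) \<le> d"
proof (induction d rule: motzkin_orth.induct)
  case (3 d)
  have "degree ([:0, 1:] - 1 :: int poly) \<le> 1"
    by (rule degree_diff_le) simp_all
  then have "degree (([:0, 1:] - 1) * motzkin_orth (Suc d)) \<le> 1 + Suc d"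
    using degree_mult_le[of "[:0, 1:] - 1" "motzkin_orth (Suc d)"] 3 by linarith
  then show ?case using 3 by (auto intro: degree_diff_le)
qed (auto intro: degree_diff_le)

lemma motzkin_functional_x_power_mult:
  assumes "degree p \<le> d"
  shows "motzkin_functional e ([:0, 1:] ^ N * p) = (\<Sum>i\<le>d. coeff p i * motzkin_paths e (N + i))"
proof -
  have x_power: "[:0, 1:] ^ N * p = monom 1 N * p"
    by (simp add: monom_altdef)
  have "degree (monom 1 N * p) \<le> N + d"
    using degree_mult_le[of "monom 1 N" p] assms by (simp add: degree_monom_eq)
  then have "motzkin_functional e ([:0, 1:] ^ N * p)
      = (\<Sum>j\<le>N + d. coeff (monom 1 N * p) j * motzkin_paths e j)"
    unfolding x_power by (rule motzkin_functional_eq_sum)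
  also have "\<dots> = (\<Sum>j = N..N + d. coeff p (j - N) * motzkin_paths e j)"
    by (rule sum.mono_neutral_cong_right) (auto simp: coeff_monom_mult)
  also have "\<dots> = (\<Sum>i\<le>d. coeff p i * motzkin_paths e (N + i))"
    by (rule sum.reindex_bij_witness[of _ "\<lambda>i. N + i" "\<lambda>j. j - N"]) auto
  finally show ?thesis .
qed

section \<open>Complete homogeneous and Schur polynomials\<close>

text \<open>The complete homogeneous symmetric polynomials in three variables under the specialisation
  e1 = e2 = x, e3 = 1, i.e. the coefficients of 1 / (1 - x t + x t^2 - t^3); they vanish at negative
  indices.\<close>
function h_poly :: "int \<Rightarrow> int poly" where
  "h_poly n = (if n < 0 then 0 else if n = 0 then 1
     else [:0, 1:] * h_poly (n - 1) - [:0, 1:] * h_poly (n - 2) + h_poly (n - 3))"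
  by auto
termination by (relation "measure nat") auto

declare h_poly.simps [simp del]

lemma h_poly_neg [simp]: "n < 0 \<Longrightarrow> h_poly n = 0"
  by (simp add: h_poly.simps)

lemma h_poly_0 [simp]: "h_poly 0 = 1"
  by (simp add: h_poly.simps)

lemma h_poly_rec: "0 < n \<Longrightarrow> h_poly n = [:0, 1:] * h_poly (n - 1) - [:0, 1:] * h_poly (n - 2) + h_poly (n - 3)"
  by (subst h_poly.simps) simp

lemma h_poly_1: "h_poly 1 = [:0, 1:]"
  by (subst h_poly_rec) simp_all

lemma h_poly_2: "h_poly 2 = [:0, 1:] * [:0, 1:] - [:0, 1:]"
  by (subst h_poly_rec) (simp_all add: h_poly_1)

lemma h_poly_eq_sum_orth: "h_poly (int n) = (\<Sum>d\<le>n. motzkin_orth d)"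
proof (induction n rule: less_induct)
  case (less n)
  consider "n = 0" | "n = 1" | "n = 2" | "3 \<le> n"
    by linarith
  then show ?case
  proof cases
    case 1
    then show ?thesis by simp
  next
    case 2
    then show ?thesis by (simp add: h_poly_1)
  next
    case 3
    then show ?thesis by (simp add: h_poly_2 numeral_2_eq_2 algebra_simps)
  next
    case 4
    define m where "m = n - 3"
    have n: "n = m + 3" using 4 by (simp add: m_def)
    have "h_poly (int n) = [:0, 1:] * h_poly (int (m + 2)) - [:0, 1:] * h_poly (int (m + 1)) + h_poly (int m)"
      using h_poly_rec[of "int n"] by (simp add: n algebra_simps)
    also have "\<dots> = [:0, 1:] * motzkin_orth (m + 2) + (\<Sum>d\<le>m. motzkin_orth d)"
      using less[of "m + 2"] less[of "m + 1"] less[of m] by (simp add: n algebra_simps)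
    also have "\<dots> = (\<Sum>d\<le>n. motzkin_orth d)"
      by (simp add: n numeral_3_eq_3 numeral_2_eq_2 algebra_simps)
    finally show ?thesis .
  qed
qed

lemma degree_h_poly: "degree (h_poly (int n)) \<le> n"
  unfolding h_poly_eq_sum_orth
  by (rule degree_sum_le) (auto intro: order_trans[OF degree_motzkin_orth])

lemma motzkin_functional_0_h_poly_mult:
  "motzkin_functional 0 (h_poly (int a) * h_poly (int b)) = int (min a b) + 1"
proof -
  have "motzkin_functional 0 (h_poly (int a) * h_poly (int b)) = (\<Sum>d\<le>a. motzkin_functional d (h_poly (int b)))"
    by (simp add: h_poly_eq_sum_orth[of a] sum_distrib_right motzkin_functional_sum motzkin_functional_0_orth_mult)
  also have "\<dots> = (\<Sum>d\<le>a. if d \<le> b then 1 else 0)"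
    by (simp add: h_poly_eq_sum_orth[of b] motzkin_functional_sum motzkin_functional_orth)
  also have "\<dots> = int (card {..min a b})"
    by (simp add: sum.If_cases Int_def atMost_def)
  finally show ?thesis by simp
qed

text \<open>Jacobi--Trudi: the Schur polynomial of the two-row shape (a, b) in the same specialisation.\<close>
definition schur :: "int \<Rightarrow> int \<Rightarrow> int poly" where
  "schur a b = h_poly a * h_poly b - h_poly (a + 1) * h_poly (b - 1)"

lemma schur_pieri:
  assumes "0 \<le> a" "0 \<le> b"
  shows "[:0, 1:] * schur a b = schur (a + 1) b + schur a (b + 1) + schur (a - 1) (b - 1)"
proof -
  define x :: "int poly" where "x = [:0, 1:]" \<comment> \<open>keeps the simplifier from rewriting x * p to pCons 0 p\<close>
  have hb: "h_poly (b + 1) = x * h_poly b - x * h_poly (b - 1) + h_poly (b - 2)"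
    using h_poly_rec[of "b + 1"] assms by (simp add: x_def)
  have ha: "h_poly (a + 2) = x * h_poly (a + 1) - x * h_poly a + h_poly (a - 1)"
    using h_poly_rec[of "a + 2"] assms by (simp add: x_def ac_simps)
  have "schur (a + 1) b = h_poly (a + 1) * h_poly b - h_poly (a + 2) * h_poly (b - 1)"
    by (simp add: schur_def add.assoc)
  moreover have "schur (a - 1) (b - 1) = h_poly (a - 1) * h_poly (b - 1) - h_poly a * h_poly (b - 2)"
    by (simp add: schur_def)
  ultimately show ?thesis
    unfolding x_def[symmetric] by (simp only: schur_def ha hb) (simp add: algebra_simps)
qed

lemma motzkin_functional_0_schur:
  assumes "0 \<le> b" "b \<le> a"
  shows "motzkin_functional 0 (schur a b) = 1"
proof -
  define a' b' where "a' = nat a" and "b' = nat b"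
  then have ab: "a = int a'" "b = int b'" "b' \<le> a'"
    using assms by auto
  show ?thesis
  proof (cases b')
    case 0
    then show ?thesis
      using motzkin_functional_0_h_poly_mult[of a' 0] ab by (simp add: schur_def)
  next
    case (Suc c)
    then have "schur a b = h_poly (int a') * h_poly (int b') - h_poly (int (Suc a')) * h_poly (int c)"
      using ab by (simp add: schur_def add.commute)
    then show ?thesis
      using ab Suc by (simp add: motzkin_functional_diff motzkin_functional_0_h_poly_mult del: of_nat_Suc)
  qed
qed

section \<open>Shapes with at most three rows\<close>

definition shape3 :: "(nat \<Rightarrow> nat) \<Rightarrow> bool" where
  "shape3 s \<longleftrightarrow> s 1 \<le> s 0 \<and> s 2 \<le> s 1 \<and> (\<forall>i\<ge>3. s i = 0)"

definition add_box :: "(nat \<Rightarrow> nat) \<Rightarrow> nat \<Rightarrow> nat \<Rightarrow> nat" where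
  "add_box s i = s(i := Suc (s i))"

definition shape_size :: "(nat \<Rightarrow> nat) \<Rightarrow> nat" where
  "shape_size s = s 0 + s 1 + s 2"

definition shapes3 :: "nat \<Rightarrow> (nat \<Rightarrow> nat) set" where
  "shapes3 n = {s. shape3 s \<and> shape_size s = n}"

lemma shape3_antimono: "shape3 s \<Longrightarrow> i \<le> j \<Longrightarrow> s j \<le> s i"
  unfolding shape3_def
  by (cases "j < 3"; cases "i < 3") (auto simp: less_Suc_eq numeral_3_eq_3 numeral_2_eq_2)

lemma shape3_pos: "shape3 s \<Longrightarrow> 0 < s i \<Longrightarrow> i < 3"
  by (rule ccontr) (simp add: shape3_def)

lemma shape3_add_box_iff:
  assumes "shape3 m"
  shows "shape3 (add_box m i) \<longleftrightarrow> i < 3 \<and> (0 < i \<longrightarrow> m i < m (i - 1))"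
  using assms
  by (cases "i < 3") (auto simp: shape3_def add_box_def less_Suc_eq numeral_3_eq_3 numeral_2_eq_2)

lemma le_add_box: "m \<le> add_box m i"
  by (simp add: add_box_def le_fun_def)

lemma add_box_le_iff: "m \<le> l \<Longrightarrow> add_box m i \<le> l \<longleftrightarrow> m i < l i"
  by (auto simp: add_box_def le_fun_def Suc_le_eq)

lemma shape_size_add_box: "i < 3 \<Longrightarrow> shape_size (add_box m i) = Suc (shape_size m)"
  by (auto simp: shape_size_def add_box_def less_Suc_eq numeral_3_eq_3 numeral_2_eq_2)

lemma shape3_eq_if_le:
  assumes "shape3 m" "shape3 l" "m \<le> l" "shape_size l = shape_size m"
  shows "l = m"
proof
  fix i
  show "l i = m i"
    using assms le_funD[OF \<open>m \<le> l\<close>, of 0] le_funD[OF \<open>m \<le> l\<close>, of 1] le_funD[OF \<open>m \<le> l\<close>, of 2]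
    by (cases "i < 3") (auto simp: shape3_def shape_size_def less_Suc_eq numeral_3_eq_3 numeral_2_eq_2)
qed

lemma finite_shapes3: "finite (shapes3 n)"
proof (rule finite_subset)
  show "shapes3 n \<subseteq> {s. \<forall>i. (i \<in> {..<3} \<longrightarrow> s i \<in> {..n}) \<and> (i \<notin> {..<3} \<longrightarrow> s i = 0)}"
    by (auto simp: shapes3_def shape3_def shape_size_def less_Suc_eq numeral_3_eq_3 numeral_2_eq_2)
qed (intro finite_set_of_finite_funs; simp)

text \<open>A full column of height three contributes the factor e3 = 1.\<close>
definition shape_schur :: "(nat \<Rightarrow> nat) \<Rightarrow> int poly" where
  "shape_schur s = schur (int (s 0) - int (s 2)) (int (s 1) - int (s 2))"

lemma sum_lessThan_3: "(\<Sum>i<3. f i) = f 0 + f 1 + f (2 :: nat)"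
  by (simp add: numeral_3_eq_3 numeral_2_eq_2)

lemma shape_schur_pieri:
  assumes "shape3 s"
  shows "[:0, 1:] * shape_schur s = (\<Sum>i<3. if shape3 (add_box s i) then shape_schur (add_box s i) else 0)"
proof -
  define a where "a = int (s 0) - int (s 2)"
  define b where "b = int (s 1) - int (s 2)"
  have "0 \<le> b" "0 \<le> a" using assms by (auto simp: shape3_def a_def b_def)
  have add_box_0: "shape_schur (add_box s 0) = schur (a + 1) b" "shape3 (add_box s 0)"
    using assms by (auto simp: shape_schur_def add_box_def a_def b_def shape3_def algebra_simps)
  have add_box_1: "shape_schur (add_box s 1) = schur a (b + 1)" "shape3 (add_box s 1) \<longleftrightarrow> s 1 < s 0"
    using assms by (auto simp: shape_schur_def add_box_def a_def b_def shape3_def algebra_simps)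
  have add_box_2: "shape_schur (add_box s 2) = schur (a - 1) (b - 1)" "shape3 (add_box s 2) \<longleftrightarrow> s 2 < s 1"
    using assms by (auto simp: shape_schur_def add_box_def a_def b_def shape3_def algebra_simps)
  have "\<not> s 1 < s 0 \<Longrightarrow> schur a (b + 1) = 0" "\<not> s 2 < s 1 \<Longrightarrow> schur (a - 1) (b - 1) = 0"
    using assms by (auto simp: shape3_def a_def b_def schur_def)
  then show ?thesis
    using schur_pieri[OF \<open>0 \<le> a\<close> \<open>0 \<le> b\<close>] add_box_0 add_box_1 add_box_2
    by (cases "s 1 < s 0"; cases "s 2 < s 1")
      (simp_all add: sum_lessThan_3 shape_schur_def[of s, folded a_def b_def])
qed

section \<open>Standard Young tableaux on a set of cells\<close>

definition SYT_on :: "(nat \<times> nat) set \<Rightarrow> ((nat \<times> nat) \<Rightarrow> nat) set" where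
  "SYT_on B = {T.
      bij_betw T B {1..card B} \<and> (\<forall>b. b \<notin> B \<longrightarrow> T b = 0) \<and>
      (\<forall>i j j'. (i, j) \<in> B \<and> (i, j') \<in> B \<and> j < j' \<longrightarrow> T (i, j) < T (i, j')) \<and>
      (\<forall>i i' j. (i, j) \<in> B \<and> (i', j) \<in> B \<and> i < i' \<longrightarrow> T (i, j) < T (i', j))}"

lemma SYT_on_range:
  assumes "T \<in> SYT_on B" "b \<in> B"
  shows "1 \<le> T b" "T b \<le> card B"
  using assms by (auto simp: SYT_on_def bij_betw_def)

lemma SYT_on_zero:
  assumes "T \<in> SYT_on B"
  shows "T b = 0 \<longleftrightarrow> b \<notin> B"
proof -
  have "b \<notin> B \<Longrightarrow> T b = 0" using assms unfolding SYT_on_def by blast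
  then show ?thesis using SYT_on_range(1)[OF assms, of b] by (cases "b \<in> B") auto
qed

lemma SYT_on_row: "T \<in> SYT_on B \<Longrightarrow> (i, j) \<in> B \<Longrightarrow> (i, j') \<in> B \<Longrightarrow> j < j' \<Longrightarrow> T (i, j) < T (i, j')"
  by (simp add: SYT_on_def)

lemma SYT_on_col: "T \<in> SYT_on B \<Longrightarrow> (i, j) \<in> B \<Longrightarrow> (i', j) \<in> B \<Longrightarrow> i < i' \<Longrightarrow> T (i, j) < T (i', j)"
  by (simp add: SYT_on_def)

lemma finite_SYT_on:
  assumes "finite B"
  shows "finite (SYT_on B)"
proof (rule finite_subset)
  show "SYT_on B \<subseteq> {T. \<forall>b. (b \<in> B \<longrightarrow> T b \<in> {1..card B}) \<and> (b \<notin> B \<longrightarrow> T b = 0)}"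
    by (auto simp: SYT_on_def bij_betw_def)
  show "finite {T. \<forall>b. (b \<in> B \<longrightarrow> T b \<in> {1..card B}) \<and> (b \<notin> B \<longrightarrow> T b = (0 :: nat))}"
    using assms by (intro finite_set_of_finite_funs) simp_all
qed

lemma SYT_on_empty: "SYT_on {} = {\<lambda>_. 0}"
  by (auto simp: SYT_on_def bij_betw_def)

definition min_cells :: "(nat \<times> nat) set \<Rightarrow> (nat \<times> nat) set" where
  "min_cells B = {(i, j) \<in> B. (\<forall>j'. (i, j') \<in> B \<longrightarrow> j \<le> j') \<and> (\<forall>i'. (i', j) \<in> B \<longrightarrow> i \<le> i')}"

lemma min_cells_iff:
  "(i, j) \<in> min_cells B \<longleftrightarrow> (i, j) \<in> B \<and> (\<forall>j'. (i, j') \<in> B \<longrightarrow> j \<le> j') \<and> (\<forall>i'. (i', j) \<in> B \<longrightarrow> i \<le> i')"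
  by (simp add: min_cells_def)

lemma min_cells_subset: "min_cells B \<subseteq> B"
  by (auto simp: min_cells_def)

lemma SYT_on_min_cell:
  assumes T: "T \<in> SYT_on B" and "T (i, j) = 1"
  shows "(i, j) \<in> min_cells B"
proof -
  have ij: "(i, j) \<in> B" using assms SYT_on_zero[OF T, of "(i, j)"] by simp
  have "j \<le> j'" if "(i, j') \<in> B" for j'
    using SYT_on_row[OF T that ij] SYT_on_range(1)[OF T that] assms by (metis less_one not_le)
  moreover have "i \<le> i'" if "(i', j) \<in> B" for i'
    using SYT_on_col[OF T that ij] SYT_on_range(1)[OF T that] assms by (metis less_one not_le)
  ultimately show ?thesis using ij by (simp add: min_cells_def)
qed

text \<open>Truncated subtraction turns the entry 1 into the value 0 that tableaux take outside
  their cells.\<close>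
lemma SYT_on_remove_first:
  assumes T: "T \<in> SYT_on B" and c: "T c = 1"
  shows "(\<lambda>b. T b - 1) \<in> SYT_on (B - {c})"
proof -
  have bij: "bij_betw T B {1..card B}" using T by (simp add: SYT_on_def)
  have "finite B" using bij_betw_finite[OF bij] by simp
  have "c \<in> B" using SYT_on_zero[OF T, of c] c by simp
  then have card: "card B = Suc (card (B - {c}))"
    using \<open>finite B\<close> by (intro card.remove)
  have "bij_betw T (B - {c}) ({1..card B} - {1})"
    using bij \<open>c \<in> B\<close> c card by (intro bij_betw_DiffI) (auto simp del: card_Diff_insert)
  also have "{1..card B} - {1} = Suc ` {1..card (B - {c})}"
    using card by (auto simp: image_Suc_atLeastAtMost)
  finally have "bij_betw ((\<lambda>k. k - 1) \<circ> T) (B - {c}) {1..card (B - {c})}"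
    by (rule bij_betw_trans) (simp add: bij_betw_def inj_on_def image_image del: image_Suc_atLeastAtMost)
  then show ?thesis
    unfolding SYT_on_def
  proof (intro CollectI conjI allI impI)
    fix b assume "b \<notin> B - {c}"
    then show "T b - 1 = 0" using c SYT_on_zero[OF T, of b] by auto
  next
    fix i j j' assume "(i, j) \<in> B - {c} \<and> (i, j') \<in> B - {c} \<and> j < j'"
    then have "T (i, j) < T (i, j')" "1 \<le> T (i, j)"
      using SYT_on_row[OF T] SYT_on_range(1)[OF T] by auto
    then show "T (i, j) - 1 < T (i, j') - 1" by linarith
  next
    fix i i' j assume "(i, j) \<in> B - {c} \<and> (i', j) \<in> B - {c} \<and> i < i'"
    then have "T (i, j) < T (i', j)" "1 \<le> T (i, j)"
      using SYT_on_col[OF T] SYT_on_range(1)[OF T] by auto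
    then show "T (i, j) - 1 < T (i', j) - 1" by linarith
  qed (simp add: comp_def)
qed

definition put_first :: "nat \<times> nat \<Rightarrow> ((nat \<times> nat) \<Rightarrow> nat) \<Rightarrow> (nat \<times> nat) \<Rightarrow> nat" where
  "put_first c T = (\<lambda>b. if b = c then 1 else if T b = 0 then 0 else Suc (T b))"

lemma put_first_eq:
  assumes "T \<in> SYT_on (B - {c})"
  shows "put_first c T b = (if b = c then 1 else if b \<in> B then Suc (T b) else 0)"
  using SYT_on_zero[OF assms, of b] by (auto simp: put_first_def)

lemma put_first_eq_1_iff: "put_first c T b = 1 \<longleftrightarrow> b = c"
  by (simp add: put_first_def)

lemma SYT_on_put_first:
  assumes T: "T \<in> SYT_on (B - {c})" and c: "c \<in> min_cells B"
  shows "put_first c T \<in> SYT_on B"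
proof -
  let ?B' = "B - {c}"
  have "c \<in> B" using c min_cells_subset by blast
  have bij: "bij_betw T ?B' {1..card ?B'}" using T by (simp add: SYT_on_def)
  then have "finite ?B'" using bij_betw_finite by fastforce
  have "bij_betw (Suc \<circ> T) ?B' (Suc ` {1..card ?B'})"
    using bij by (rule bij_betw_trans) simp
  then have "bij_betw (put_first c T) ?B' (Suc ` {1..card ?B'})"
    by (rule bij_betw_cong[THEN iffD1, rotated]) (simp add: put_first_eq[OF T])
  then have "bij_betw (put_first c T) (?B' \<union> {c}) (Suc ` {1..card ?B'} \<union> {put_first c T c})"
    by (rule notIn_Un_bij_betw[rotated 2]) (auto simp: put_first_def)
  moreover have "?B' \<union> {c} = B" using \<open>c \<in> B\<close> by auto
  moreover have "Suc ` {1..card ?B'} \<union> {put_first c T c} = {1..card B}"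
    using \<open>c \<in> B\<close> \<open>finite ?B'\<close> by (auto simp: put_first_def card_Diff_singleton_if Suc_le_eq card_gt_0_iff)
  ultimately have "bij_betw (put_first c T) B {1..card B}" by simp
  then show ?thesis
    unfolding SYT_on_def
  proof (intro CollectI conjI allI impI)
    fix b assume "b \<notin> B"
    then show "put_first c T b = 0" using \<open>c \<in> B\<close> by (auto simp: put_first_eq[OF T] SYT_on_zero[OF T])
  next
    fix i j j' assume ij: "(i, j) \<in> B \<and> (i, j') \<in> B \<and> j < j'"
    then have "(i, j') \<noteq> c" using c by (auto simp: min_cells_def)
    then show "put_first c T (i, j) < put_first c T (i, j')"
      using ij SYT_on_row[OF T, of i j j'] by (auto simp: put_first_eq[OF T] SYT_on_zero[OF T])
  next
    fix i i' j assume ij: "(i, j) \<in> B \<and> (i', j) \<in> B \<and> i < i'"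
    then have "(i', j) \<noteq> c" using c by (auto simp: min_cells_def)
    then show "put_first c T (i, j) < put_first c T (i', j)"
      using ij SYT_on_col[OF T, of i j i'] by (auto simp: put_first_eq[OF T] SYT_on_zero[OF T])
  qed
qed

lemma put_first_remove_first:
  assumes T: "T \<in> SYT_on B" and c: "T c = 1"
  shows "put_first c (\<lambda>b. T b - 1) = T"
proof
  fix b
  have "c \<in> B" using SYT_on_zero[OF T, of c] c by simp
  have "T b \<noteq> 1" if "b \<noteq> c"
  proof
    assume "T b = 1"
    then have "b \<in> B" using SYT_on_zero[OF T, of b] by simp
    then show False
      using T \<open>c \<in> B\<close> \<open>T b = 1\<close> c that by (auto simp: SYT_on_def bij_betw_def inj_on_def)
  qed
  then show "put_first c (\<lambda>b. T b - 1) b = T b"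
    using c by (auto simp: put_first_def)
qed

lemma remove_first_put_first:
  assumes "T \<in> SYT_on (B - {c})"
  shows "(\<lambda>b. put_first c T b - 1) = T"
  using SYT_on_zero[OF assms, of c] by (auto simp: put_first_def)

lemma card_SYT_on_eq_sum_min_cells:
  assumes "finite B" "B \<noteq> {}"
  shows "card (SYT_on B) = (\<Sum>c\<in>min_cells B. card (SYT_on (B - {c})))"
proof -
  let ?S = "SIGMA c:min_cells B. SYT_on (B - {c})"
  have "inj_on (\<lambda>(c, T). put_first c T) ?S"
  proof (rule inj_onI)
    fix x y assume "x \<in> ?S" "y \<in> ?S" and eq: "(\<lambda>(c, T). put_first c T) x = (\<lambda>(c, T). put_first c T) y"
    then obtain c T c' T' where xy: "x = (c, T)" "y = (c', T')"
      and T: "T \<in> SYT_on (B - {c})" and T': "T' \<in> SYT_on (B - {c'})" by auto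
    have "put_first c T = put_first c' T'" using eq xy by simp
    moreover from this have "c = c'" using put_first_eq_1_iff by metis
    ultimately show "x = y"
      using xy remove_first_put_first[OF T] remove_first_put_first[OF T'] by metis
  qed
  moreover have "(\<lambda>(c, T). put_first c T) ` ?S = SYT_on B"
  proof
    show "(\<lambda>(c, T). put_first c T) ` ?S \<subseteq> SYT_on B"
      by (auto intro: SYT_on_put_first)
  next
    show "SYT_on B \<subseteq> (\<lambda>(c, T). put_first c T) ` ?S"
    proof
      fix T assume T: "T \<in> SYT_on B"
      then have "1 \<in> T ` B"
        using assms by (auto simp: SYT_on_def bij_betw_def Suc_le_eq card_gt_0_iff)
      then obtain i j where c: "T (i, j) = 1" by auto
      have "(i, j) \<in> min_cells B" "(\<lambda>b. T b - 1) \<in> SYT_on (B - {(i, j)})"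
        using SYT_on_min_cell[OF T c] SYT_on_remove_first[OF T c] by auto
      then show "T \<in> (\<lambda>(c, T). put_first c T) ` ?S"
        using put_first_remove_first[OF T c] by force
    qed
  qed
  ultimately have "card (SYT_on B) = card ?S"
    by (metis bij_betw_def bij_betw_same_card)
  also have "\<dots> = (\<Sum>c\<in>min_cells B. card (SYT_on (B - {c})))"
    using assms by (intro card_SigmaI) (auto intro: finite_subset[OF min_cells_subset] finite_SYT_on)
  finally show ?thesis .
qed

section \<open>Skew tableaux as walks in Young's lattice\<close>

definition boxes :: "(nat \<Rightarrow> nat) \<Rightarrow> (nat \<Rightarrow> nat) \<Rightarrow> (nat \<times> nat) set" where
  "boxes l m = {(i, j). m i \<le> j \<and> j < l i}"

lemma boxes_same: "boxes m m = {}"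
  by (simp add: boxes_def)

lemma boxes_add_box: "boxes l (add_box m i) = boxes l m - {(i, m i)}"
  by (auto simp: boxes_def add_box_def split: if_splits)

lemma boxes_nonempty:
  assumes "m \<le> l" "shape_size m < shape_size l"
  shows "boxes l m \<noteq> {}"
proof -
  obtain i where "m i < l i"
    using assms by (metis le_funD add_mono not_less shape_size_def)
  then have "(i, m i) \<in> boxes l m" by (simp add: boxes_def)
  then show ?thesis by blast
qed

lemma finite_boxes: "shape3 l \<Longrightarrow> finite (boxes l m)"
proof (rule finite_subset)
  assume l: "shape3 l"
  show "boxes l m \<subseteq> {..<3} \<times> {..<l 0}"
  proof
    fix c assume "c \<in> boxes l m"
    then obtain i j where "c = (i, j)" "j < l i" by (auto simp: boxes_def)
    then show "c \<in> {..<3} \<times> {..<l 0}"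
      using shape3_pos[OF l, of i] shape3_antimono[OF l, of 0 i] by auto
  qed
qed simp

lemma min_cells_boxes:
  assumes l: "shape3 l" and m: "shape3 m" and "m \<le> l"
  shows "min_cells (boxes l m) = (\<lambda>i. (i, m i)) ` {i. shape3 (add_box m i) \<and> add_box m i \<le> l}"
proof (intro equalityI subsetI)
  fix c assume c: "c \<in> min_cells (boxes l m)"
  then obtain i j where ij: "c = (i, j)" "m i \<le> j" "j < l i"
    by (auto simp: min_cells_def boxes_def)
  then have "(i, m i) \<in> boxes l m" by (simp add: boxes_def)
  then have "j = m i" using c ij min_cells_iff[of i j] by (metis le_antisym)
  have "i < 3" using ij shape3_pos[OF l, of i] by simp
  moreover have "m i < m (i - 1)" if "0 < i"
  proof (rule ccontr)
    assume "\<not> m i < m (i - 1)"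
    then have "(i - 1, m i) \<in> boxes l m"
      using ij \<open>j = m i\<close> shape3_antimono[OF l, of "i - 1" i] by (auto simp: boxes_def)
    then show False using c ij \<open>j = m i\<close> that min_cells_iff[of i j] by (metis diff_less less_one not_le)
  qed
  ultimately show "c \<in> (\<lambda>i. (i, m i)) ` {i. shape3 (add_box m i) \<and> add_box m i \<le> l}"
    using ij \<open>j = m i\<close> by (auto simp: shape3_add_box_iff[OF m] add_box_le_iff[OF \<open>m \<le> l\<close>])
next
  fix c assume "c \<in> (\<lambda>i. (i, m i)) ` {i. shape3 (add_box m i) \<and> add_box m i \<le> l}"
  then obtain i where c: "c = (i, m i)" and "m i < l i" and i: "0 < i \<Longrightarrow> m i < m (i - 1)"
    by (auto simp: shape3_add_box_iff[OF m] add_box_le_iff[OF \<open>m \<le> l\<close>])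
  have "i \<le> i'" if "(i', m i) \<in> boxes l m" for i'
  proof (rule ccontr)
    assume "\<not> i \<le> i'"
    then have "m (i - 1) \<le> m i'" using shape3_antimono[OF m, of i' "i - 1"] by simp
    then show False using that i \<open>\<not> i \<le> i'\<close> by (auto simp: boxes_def)
  qed
  then show "c \<in> min_cells (boxes l m)"
    using c \<open>m i < l i\<close> by (auto simp: min_cells_iff boxes_def)
qed

lemma card_SYT_boxes_rec:
  assumes l: "shape3 l" and m: "shape3 m" and "m \<le> l" and "boxes l m \<noteq> {}"
  shows "card (SYT_on (boxes l m)) = (\<Sum>i<3.
    if shape3 (add_box m i) \<and> add_box m i \<le> l then card (SYT_on (boxes l (add_box m i))) else 0)"
proof -
  have "card (SYT_on (boxes l m)) = (\<Sum>c\<in>min_cells (boxes l m). card (SYT_on (boxes l m - {c})))"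
    using finite_boxes[OF l] assms(4) by (rule card_SYT_on_eq_sum_min_cells)
  also have "\<dots> = (\<Sum>i\<in>{i. shape3 (add_box m i) \<and> add_box m i \<le> l}. card (SYT_on (boxes l (add_box m i))))"
    by (simp add: min_cells_boxes[OF l m \<open>m \<le> l\<close>] sum.reindex inj_on_def boxes_add_box)
  also have "{i. shape3 (add_box m i) \<and> add_box m i \<le> l} = {i \<in> {..<3}. shape3 (add_box m i) \<and> add_box m i \<le> l}"
    by (auto simp: shape3_add_box_iff[OF m])
  finally show ?thesis
    by (simp only: sum.inter_filter[OF finite_lessThan])
qed

definition SYT_count :: "nat \<Rightarrow> (nat \<Rightarrow> nat) \<Rightarrow> nat" where
  "SYT_count N m = (\<Sum>l\<in>shapes3 (shape_size m + N). if m \<le> l then card (SYT_on (boxes l m)) else 0)"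

lemma SYT_count_0:
  assumes m: "shape3 m"
  shows "SYT_count 0 m = 1"
proof -
  have "SYT_count 0 m = (\<Sum>l\<in>shapes3 (shape_size m). if l = m then 1 else 0)"
    unfolding SYT_count_def
    using shape3_eq_if_le[OF m] by (intro sum.cong) (auto simp: shapes3_def boxes_same SYT_on_empty)
  also have "\<dots> = 1"
    using m finite_shapes3 by (simp add: shapes3_def)
  finally show ?thesis .
qed

lemma SYT_count_Suc:
  assumes m: "shape3 m"
  shows "SYT_count (Suc N) m = (\<Sum>i<3. if shape3 (add_box m i) then SYT_count N (add_box m i) else 0)"
proof -
  let ?f = "\<lambda>i l. if shape3 (add_box m i) \<and> add_box m i \<le> l then card (SYT_on (boxes l (add_box m i))) else 0"
  have "SYT_count (Suc N) m = (\<Sum>l\<in>shapes3 (shape_size m + Suc N). \<Sum>i<3. ?f i l)"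
    unfolding SYT_count_def
  proof (intro sum.cong refl)
    fix l assume "l \<in> shapes3 (shape_size m + Suc N)"
    then have l: "shape3 l" "shape_size m < shape_size l" by (auto simp: shapes3_def)
    show "(if m \<le> l then card (SYT_on (boxes l m)) else 0) = (\<Sum>i<3. ?f i l)"
    proof (cases "m \<le> l")
      case True
      then show ?thesis using card_SYT_boxes_rec[OF l(1) m True boxes_nonempty[OF True l(2)]] by simp
    next
      case False
      then have "\<not> add_box m i \<le> l" for i using le_add_box order_trans by blast
      then show ?thesis using False by simp
    qed
  qed
  also have "\<dots> = (\<Sum>i<3. \<Sum>l\<in>shapes3 (shape_size m + Suc N). ?f i l)"
    by (rule sum.swap)
  also have "\<dots> = (\<Sum>i<3. if shape3 (add_box m i) then SYT_count N (add_box m i) else 0)"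
    by (intro sum.cong refl) (simp add: SYT_count_def shape_size_add_box)
  finally show ?thesis .
qed

lemma SYT_count_eq_motzkin_functional:
  "shape3 m \<Longrightarrow> int (SYT_count N m) = motzkin_functional 0 ([:0, 1:] ^ N * shape_schur m)"
proof (induction N arbitrary: m)
  case 0
  then show ?case
    by (simp add: SYT_count_0 shape_schur_def shape3_def motzkin_functional_0_schur)
next
  case (Suc N)
  have "[:0, 1:] ^ Suc N * shape_schur m = [:0, 1:] ^ N * ([:0, 1:] * shape_schur m)"
    by (simp only: power_Suc2 mult.assoc)
  also have "\<dots> = (\<Sum>i<3. if shape3 (add_box m i) then [:0, 1:] ^ N * shape_schur (add_box m i) else 0)"
    unfolding shape_schur_pieri[OF Suc.prems] sum_distrib_left by (intro sum.cong) auto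
  finally show ?case
    using Suc.IH by (simp add: SYT_count_Suc[OF Suc.prems] motzkin_functional_sum of_nat_sum if_distrib
        cong: if_cong)
qed

section \<open>The generating function\<close>

lemma r_gf_nth:
  defines "R \<equiv> fps_nth r_gf"
  shows "R 0 = 0" "R 1 = 1" "R 2 = fps_X"
    "R (n + 3) = fps_X * R (n + 2) - fps_X * R (n + 1) + R n"
proof -
  define D :: "real fps fps" where "D = (1 - fps_X) * (1 + fps_const (1 - fps_X) * fps_X + fps_X ^ 2)"
  have "D * r_gf = fps_X"
  proof -
    have "fps_nth D 0 = 1" by (simp add: D_def)
    moreover have "inverse (1 :: real fps) = 1" by (rule fps_inverse_one') simp
    ultimately have "D * inverse D = 1"
      using fps_right_inverse[of D 1] by (simp add: fps_inverse_def)
    then show ?thesis unfolding r_gf_def D_def[symmetric] by (metis mult.left_commute mult.right_neutral)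
  qed
  moreover have "D = 1 - fps_const fps_X * fps_X + fps_const fps_X * fps_X ^ 2 - fps_X ^ 3"
    by (simp add: D_def fps_const_sub[symmetric] power2_eq_square power3_eq_cube algebra_simps)
  ultimately have "fps_X = r_gf - fps_const fps_X * (fps_X * r_gf) + fps_const fps_X * (fps_X ^ 2 * r_gf) - fps_X ^ 3 * r_gf"
    by (simp add: algebra_simps)
  then have rec: "fps_nth fps_X k = R k - fps_X * fps_nth (fps_X * r_gf) k
      + fps_X * fps_nth (fps_X ^ 2 * r_gf) k - fps_nth (fps_X ^ 3 * r_gf) k" for k
    unfolding R_def by (metis fps_add_nth fps_sub_nth fps_mult_left_const_nth)
  note shift = fps_X_power_mult_nth R_def
  show "R 0 = 0" using rec[of 0] by (simp add: shift)
  then show "R 1 = 1" using rec[of 1] by (simp add: shift)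
  then show "R 2 = fps_X" using rec[of 2] \<open>R 0 = 0\<close> by (simp add: shift)
  show "R (n + 3) = fps_X * R (n + 2) - fps_X * R (n + 1) + R n"
    using rec[of "n + 3"] unfolding shift by (simp add: algebra_simps)
qed

lemma r_coeff_eq_coeff_h_poly: "r_coeff (n + 1) i = of_int (coeff (h_poly (int n)) i)"
proof (induction n arbitrary: i rule: less_induct)
  case (less n)
  note R = r_gf_nth
  consider "n = 0" | "n = 1" | "n = 2" | "3 \<le> n" by linarith
  then show ?case
  proof cases
    case 1
    then show ?thesis using R(2) by (simp add: r_coeff_def)
  next
    case 2
    then show ?thesis using R(3) by (simp add: r_coeff_def h_poly_1 coeff_pCons numeral_2_eq_2 split: nat.split)
  next
    case 3
    have "fps_nth r_gf 3 = fps_X * fps_X - fps_X"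
      using R(1-3) R(4)[of 0] by (simp add: numeral_2_eq_2 numeral_3_eq_3)
    then show ?thesis using 3
      by (simp add: r_coeff_def h_poly_2 coeff_pCons numeral_2_eq_2 numeral_3_eq_3 split: nat.split)
  next
    case 4
    define m where "m = n - 3"
    have n: "n = m + 3" using 4 by (simp add: m_def)
    have IH: "r_coeff (j + 1) i' = of_int (coeff (h_poly (int j)) i')" if "j \<in> {m, m + 1, m + 2}" for j i'
      using less that n by auto
    have "fps_nth r_gf (n + 1) = fps_X * fps_nth r_gf (m + 2 + 1) - fps_X * fps_nth r_gf (m + 1 + 1) + fps_nth r_gf (m + 1)"
      using R(4)[of "m + 1"] by (simp add: n)
    then have "r_coeff (n + 1) i = (if i = 0 then 0 else r_coeff (m + 2 + 1) (i - 1) - r_coeff (m + 1 + 1) (i - 1))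
        + r_coeff (m + 1) i"
      by (simp add: r_coeff_def)
    also have "\<dots> = of_int ((if i = 0 then 0 else coeff (h_poly (int (m + 2))) (i - 1) - coeff (h_poly (int (m + 1))) (i - 1))
        + coeff (h_poly (int m)) i)"
      using IH[of m] IH[of "m + 1"] IH[of "m + 2"] by simp
    also have "h_poly (int m) = h_poly (int n) - [:0, 1:] * h_poly (int (m + 2)) + [:0, 1:] * h_poly (int (m + 1))"
      using h_poly_rec[of "int n"] by (simp add: n algebra_simps)
    finally show ?thesis
      by (simp add: coeff_pCons split: nat.split)
  qed
qed

section \<open>Partitions as shapes\<close>

lemma skew_SYT_eq_SYT_on: "skew_SYT lam mu = SYT_on (skew_boxes lam mu)"
  by (simp add: skew_SYT_def SYT_on_def)

lemma skew_boxes_eq_boxes: "skew_boxes lam mu = boxes (part lam) (part mu)"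
  by (auto simp: skew_boxes_def boxes_def part_def split: if_splits)

lemma part_Nil [simp]: "part [] i = 0"
  by (simp add: part_def)

lemma part_Cons: "part (x # xs) i = (if i = 0 then x else part xs (i - 1))"
  by (cases i) (simp_all add: part_def)

lemma part_eq_0_iff: "is_partition lam \<Longrightarrow> part lam i = 0 \<longleftrightarrow> length lam \<le> i"
  by (auto simp: part_def is_partition_def)

lemma part_antimono:
  assumes "is_partition lam" "i \<le> j"
  shows "part lam j \<le> part lam i"
  using assms by (cases "i = j") (auto simp: part_def is_partition_def sorted_wrt_iff_nth_less)

lemma sum_part: "length lam \<le> k \<Longrightarrow> (\<Sum>i<k. part lam i) = sum_list lam"
  by (simp add: sum_list_sum_nth part_def atLeast0LessThan sum.If_cases Int_absorb1 lessThan_subset_iff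
      flip: lessThan_def)

lemma part_in_shapes3:
  assumes "lam \<in> partitions_at_most3 n"
  shows "part lam \<in> shapes3 n"
proof -
  have lam: "is_partition lam" "length lam \<le> 3" "sum_list lam = n"
    using assms by (auto simp: partitions_at_most3_def)
  then have "shape_size (part lam) = n"
    using sum_part[of lam 3] by (simp add: shape_size_def numeral_3_eq_3 numeral_2_eq_2)
  moreover have "\<forall>i\<ge>3. part lam i = 0"
    using lam(2) by (simp add: part_def)
  then have "shape3 (part lam)"
    using part_antimono[OF lam(1), of 0 1] part_antimono[OF lam(1), of 1 2] by (simp add: shape3_def)
  ultimately show ?thesis by (simp add: shapes3_def)
qed

lemma inj_on_part: "inj_on part {lam. is_partition lam}"
proof (rule inj_onI, simp)
  fix lam mu assume "is_partition lam" "is_partition mu" "part lam = part mu"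
  then show "lam = mu"
  proof (induction lam arbitrary: mu)
    case Nil
    then show ?case using part_eq_0_iff[of mu 0] by (metis le_zero_eq length_0_conv part_Nil)
  next
    case (Cons x lam)
    then obtain y mu' where mu: "mu = y # mu'"
      using part_eq_0_iff[of "x # lam" 0] by (cases mu) auto
    have "part lam = part mu'"
      using fun_cong[OF Cons.prems(3), of "Suc i" for i] by (auto simp: mu part_Cons)
    moreover have "x = y"
      using fun_cong[OF Cons.prems(3), of 0] by (simp add: mu part_Cons)
    ultimately show ?case
      using Cons.IH[of mu'] Cons.prems(1,2) by (simp add: mu is_partition_def)
  qed
qed

lemma part_filter_pos:
  assumes "shape3 s"
  shows "part (filter (\<lambda>x. 0 < x) [s 0, s 1, s 2]) = s"
proof
  fix i :: nat
  consider "i = 0" | "i = 1" | "i = 2" | "3 \<le> i" by linarith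
  then show "part (filter (\<lambda>x. 0 < x) [s 0, s 1, s 2]) i = s i"
    using assms by cases (auto simp: shape3_def part_Cons part_def)
qed

lemma shapes3_eq_image_part: "shapes3 n = part ` partitions_at_most3 n"
proof
  show "part ` partitions_at_most3 n \<subseteq> shapes3 n"
    using part_in_shapes3 by blast
next
  show "shapes3 n \<subseteq> part ` partitions_at_most3 n"
  proof
    fix s assume s: "s \<in> shapes3 n"
    define lam where "lam = filter (\<lambda>x. 0 < x) [s 0, s 1, s 2]"
    have "is_partition lam"
      using s by (auto simp: lam_def is_partition_def shapes3_def shape3_def intro: sorted_wrt_filter)
    moreover have "sum_list lam = n"
      using s by (simp add: lam_def shapes3_def shape_size_def)
    ultimately have "lam \<in> partitions_at_most3 n"
      by (simp add: partitions_at_most3_def lam_def)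
    then show "s \<in> part ` partitions_at_most3 n"
      using part_filter_pos s by (force simp: lam_def shapes3_def)
  qed
qed

lemma part_contains_iff: "is_partition mu \<Longrightarrow> part_contains mu lam \<longleftrightarrow> part mu \<le> part lam"
proof
  assume "part_contains mu lam"
  then show "part mu \<le> part lam"
    by (auto simp: part_contains_def part_def le_fun_def)
next
  assume mu: "is_partition mu" and le: "part mu \<le> part lam"
  have "length mu \<le> length lam"
  proof (rule ccontr)
    assume "\<not> length mu \<le> length lam"
    then have "0 < part mu (length lam)" using mu by (simp add: part_def is_partition_def)
    then show False using le_funD[OF le, of "length lam"] by (simp add: part_def)
  qed
  moreover have "mu ! i \<le> lam ! i" if "i < length mu" for i
    using le_funD[OF le, of i] that \<open>length mu \<le> length lam\<close> by (simp add: part_def)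
  ultimately show "part_contains mu lam"
    by (simp add: part_contains_def)
qed

lemma sum_card_skew_SYT_eq_SYT_count:
  assumes mu: "mu \<in> partitions_at_most3 n0" and "n0 \<le> n"
  shows "(\<Sum>lam \<in> {lam \<in> partitions_at_most3 n. part_contains mu lam}. card (skew_SYT lam mu))
    = SYT_count (n - n0) (part mu)"
proof -
  have "is_partition mu" using mu by (simp add: partitions_at_most3_def)
  have m: "part mu \<in> shapes3 n0" by (rule part_in_shapes3[OF mu])
  have inj: "inj_on part (partitions_at_most3 n)"
    by (rule inj_on_subset[OF inj_on_part]) (auto simp: partitions_at_most3_def)
  then have "finite (partitions_at_most3 n)"
    using finite_shapes3[of n] by (simp add: shapes3_eq_image_part finite_image_iff)
  have "(\<Sum>lam \<in> {lam \<in> partitions_at_most3 n. part_contains mu lam}. card (skew_SYT lam mu))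
      = (\<Sum>lam \<in> partitions_at_most3 n. if part mu \<le> part lam then card (SYT_on (boxes (part lam) (part mu))) else 0)"
    using \<open>finite (partitions_at_most3 n)\<close>
    by (simp only: sum.inter_filter part_contains_iff[OF \<open>is_partition mu\<close>]
        skew_SYT_eq_SYT_on skew_boxes_eq_boxes)
  also have "\<dots> = (\<Sum>l \<in> shapes3 n. if part mu \<le> l then card (SYT_on (boxes l (part mu))) else 0)"
    unfolding shapes3_eq_image_part sum.reindex[OF inj] by simp
  also have "\<dots> = SYT_count (n - n0) (part mu)"
    using m \<open>n0 \<le> n\<close> by (simp add: SYT_count_def shapes3_def)
  finally show ?thesis .
qed

theorem theorem2p1:
  fixes k n :: nat
  assumes "1 \<le> k" and "k - 1 \<le> n"
  shows "real (\<Sum>lam \<in> {lam \<in> partitions_at_most3 n. part_contains ((if k = 1 then [] else [k - 1])) lam}.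
                 card (skew_SYT lam ((if k = 1 then [] else [k - 1]))))
         = (\<Sum>i = 0..k - 1. r_coeff k i * real (motzkin (i + (n + 1 - k))))"
proof -
  define mu where "mu = (if k = 1 then [] else [k - 1])"
  define N where "N = n + 1 - k"
  have mu: "mu \<in> partitions_at_most3 (k - 1)"
    using assms by (simp add: mu_def partitions_at_most3_def is_partition_def)
  have count: "(\<Sum>lam \<in> {lam \<in> partitions_at_most3 n. part_contains mu lam}. card (skew_SYT lam mu))
      = SYT_count N (part mu)"
    using sum_card_skew_SYT_eq_SYT_count[OF mu \<open>k - 1 \<le> n\<close>] assms by (simp add: N_def)
  have "shape_schur (part mu) = h_poly (int (k - 1))"
    using assms by (simp add: mu_def part_def shape_schur_def schur_def)
  then have "int (SYT_count N (part mu)) = motzkin_functional 0 ([:0, 1:] ^ N * h_poly (int (k - 1)))"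
    using SYT_count_eq_motzkin_functional[of "part mu" N] part_in_shapes3[OF mu] by (simp add: shapes3_def)
  also have "\<dots> = (\<Sum>i\<le>k - 1. coeff (h_poly (int (k - 1))) i * int (motzkin (N + i)))"
    by (simp add: motzkin_functional_x_power_mult[OF degree_h_poly] motzkin_paths_0)
  finally have "real (SYT_count N (part mu))
      = (\<Sum>i\<le>k - 1. of_int (coeff (h_poly (int (k - 1))) i) * real (motzkin (N + i)))"
    by (metis (no_types, lifting) of_int_of_nat_eq of_int_mult of_int_sum sum.cong)
  also have "\<dots> = (\<Sum>i = 0..k - 1. r_coeff k i * real (motzkin (i + N)))"
    using r_coeff_eq_coeff_h_poly[of "k - 1"] assms by (simp add: atLeast0AtMost add.commute)
  finally show ?thesis
    using count by (simp add: mu_def N_def)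
qed

end
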